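(* There is an absolute constant $c>0$ such that the following holds. Let $A$ be a finite subset of $\mathbb{R}$ with $A\neq\{0\}$, and let $B$ and $C$ be finite sets of real numbers with $B+C\neq\{0\}$. Then $$|A(B+C)|\ge c\,(|A||B||C|)^{1/2}.$$
   Context: $B+C=\{b+c:b\in B,c\in C\}$ and $A(B+C)=\{a(b+c):a\in A,b\in B,c\in C\}$. *)

theory Defs
  imports Complex_Main
begin

definition sumset :: "real set \<Rightarrow> real set \<Rightarrow> real set" where
  "sumset B C = {b + c | b c. b \<in> B \<and> c \<in> C}"

definition prodsumset :: "real set \<Rightarrow> real set \<Rightarrow> real set \<Rightarrow> real set" where
  "prodsumset A B C = {a * (b + c) | a b c. a \<in> A \<and> b \<in> B \<and> c \<in> C}"

end

theory Submission
  imports Defs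
begin

text \<open>
  First reduce to \<open>A\<close> of positive numbers (keeping a quarter of \<open>A\<close>, possibly after
  negation) and to \<open>|C| \<ge> 2\<close> (by symmetry; otherwise \<open>B\<close>, \<open>C\<close> are singletons).
  Let \<open>X = A(B+C)\<close>. For \<open>a \<in> A\<close>, \<open>b \<in> B\<close> and a non-maximal \<open>c \<in> C\<close> with successor
  \<open>c\<^sup>+\<close> in \<open>C\<close>, let \<open>n(a,b,c)\<close> count the elements of \<open>X\<close> in \<open>[a(b+c), a(b+c\<^sup>+))\<close>.
  For fixed \<open>a, b\<close> these intervals are disjoint, so \<open>\<Sum> n \<le> |A||B||X|\<close>. A triple with
  \<open>n \<le> D\<close> is determined by \<open>c\<close>, \<open>x = a(b+c)\<close> and \<open>y = a(b+c\<^sup>+)\<close>, where \<open>y\<close> is among the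
  first \<open>D\<close> elements of \<open>X\<close> above \<open>x\<close>; so at most \<open>|C'||X|D\<close> triples have \<open>n \<le> D\<close>,
  where \<open>C'\<close> is \<open>C\<close> without its maximum. Hence \<open>|A||B||C'| \<le> |A||B||X|/D + |C'||X|D\<close>,
  and \<open>D = 2|X|/|C'|\<close> gives \<open>|A||B||C'| \<le> 4|X|\<^sup>2\<close>.
\<close>

definition next_in :: "'a::linorder set \<Rightarrow> 'a \<Rightarrow> 'a" where
  "next_in C c = Min {y\<in>C. c < y}"

lemma next_in:
  fixes C :: "'a::linorder set"
  assumes "finite C" and "c \<in> C - {Max C}"
  shows next_in_mem: "next_in C c \<in> C"
    and less_next_in: "c < next_in C c"
    and next_in_le: "y \<in> C \<Longrightarrow> c < y \<Longrightarrow> next_in C c \<le> y"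
proof -
  have "C \<noteq> {}" using assms(2) by blast
  then have "Max C \<in> {y\<in>C. c < y}"
    using assms Max_ge[OF assms(1)] by (auto simp: order.not_eq_order_implies_strict)
  then have "{y\<in>C. c < y} \<noteq> {}" by blast
  then have "next_in C c \<in> {y\<in>C. c < y}"
    unfolding next_in_def by (rule Min_in[rotated]) (simp add: assms(1))
  then show "next_in C c \<in> C" and "c < next_in C c" by auto
  show "y \<in> C \<Longrightarrow> c < y \<Longrightarrow> next_in C c \<le> y"
    using assms(1) by (simp add: next_in_def)
qed

lemma sum_card_gaps_le:
  fixes X :: "'b::linorder set" and C :: "'a::linorder set" and g :: "'a \<Rightarrow> 'b"
  assumes fX: "finite X" and fC: "finite C" and g: "mono_on C g"
  shows "(\<Sum>c\<in>C - {Max C}. card {z\<in>X. g c \<le> z \<and> z < g (next_in C c)}) \<le> card X"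
proof -
  define I where "I c = {z\<in>X. g c \<le> z \<and> z < g (next_in C c)}" for c
  have disjoint: "I c \<inter> I c' = {}" if "c \<in> C - {Max C}" "c' \<in> C - {Max C}" "c < c'" for c c'
  proof -
    have "g (next_in C c) \<le> g c'"
      using that fC by (intro mono_onD[OF g] next_in_mem next_in_le) auto
    then show ?thesis by (auto simp: I_def)
  qed
  have "\<forall>c\<in>C - {Max C}. \<forall>c'\<in>C - {Max C}. c \<noteq> c' \<longrightarrow> I c \<inter> I c' = {}"
    using disjoint by (metis Int_commute linorder_neqE)
  then have "(\<Sum>c\<in>C - {Max C}. card (I c)) = card (\<Union>c\<in>C - {Max C}. I c)"
    using fC fX by (intro card_UN_disjoint[symmetric]) (auto simp: I_def)
  also have "\<dots> \<le> card X" using fX by (intro card_mono) (auto simp: I_def)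
  finally show ?thesis by (simp add: I_def)
qed

lemma card_close_successors_le:
  fixes X :: "'a::linorder set" and D :: real
  assumes fX: "finite X" and x: "x \<in> X" and D: "0 \<le> D"
  shows "card {y\<in>X. x < y \<and> card {z\<in>X. x \<le> z \<and> z < y} \<le> D} \<le> D"
proof -
  define S where "S = {y\<in>X. x < y \<and> card {z\<in>X. x \<le> z \<and> z < y} \<le> D}"
  show ?thesis
  proof (cases "S = {}")
    case True
    then show ?thesis
      unfolding S_def[symmetric] using D by simp
  next
    case False
    define m where "m = Max S"
    have fS: "finite S" using fX by (simp add: S_def)
    have m: "m \<in> S" using fS False by (simp add: m_def)
    define J where "J = {z\<in>X. x < z \<and> z < m}"
    have fJ: "finite J" using fX by (simp add: J_def)
    have "S \<subseteq> insert m J"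
    proof
      fix y assume y: "y \<in> S"
      then have "y \<le> m" using fS by (simp add: m_def)
      then show "y \<in> insert m J" using y by (auto simp: S_def J_def)
    qed
    then have "card S \<le> card (insert m J)"
      using fJ by (intro card_mono) auto
    also have "\<dots> = Suc (card J)" using fJ by (simp add: J_def)
    also have "\<dots> = card {z\<in>X. x \<le> z \<and> z < m}"
    proof -
      have "{z\<in>X. x \<le> z \<and> z < m} = insert x J"
        using x m by (auto simp: J_def S_def)
      then show ?thesis using fJ by (simp add: J_def)
    qed
    finally have "real (card S) \<le> card {z\<in>X. x \<le> z \<and> z < m}" by linarith
    also have "\<dots> \<le> D" using m by (simp add: S_def)
    finally show ?thesis by (simp add: S_def)
  qed
qed

lemma card_le_sum_div_plus_card_le:
  fixes f :: "'a \<Rightarrow> real"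
  assumes fS: "finite S" and D: "D > 0" and f: "\<And>t. t \<in> S \<Longrightarrow> 0 \<le> f t"
  shows "card S \<le> (\<Sum>t\<in>S. f t) / D + card {t\<in>S. f t \<le> D}"
proof -
  have "card S = (\<Sum>t\<in>S. 1::real)" by simp
  also have "\<dots> \<le> (\<Sum>t\<in>S. f t / D + (if f t \<le> D then 1 else 0))"
    using D f by (intro sum_mono) (auto simp: field_simps)
  also have "\<dots> = (\<Sum>t\<in>S. f t) / D + card {t\<in>S. f t \<le> D}"
    by (simp add: sum.distrib sum_divide_distrib sum.If_cases[OF fS] Int_def)
  finally show ?thesis .
qed

lemma finite_prodsumset:
  assumes "finite A" "finite B" "finite C"
  shows "finite (prodsumset A B C)"
proof -
  have "prodsumset A B C = (\<lambda>(a, b, c). a * (b + c)) ` (A \<times> B \<times> C)"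
    by (auto simp: prodsumset_def image_iff) blast
  then show ?thesis using assms by simp
qed

lemma mem_prodsumset: "a \<in> A \<Longrightarrow> b \<in> B \<Longrightarrow> c \<in> C \<Longrightarrow> a * (b + c) \<in> prodsumset A B C"
  unfolding prodsumset_def by blast

lemma prodsumset_mono: "A' \<subseteq> A \<Longrightarrow> prodsumset A' B C \<subseteq> prodsumset A B C"
  unfolding prodsumset_def by blast

lemma prodsumset_commute: "prodsumset A B C = prodsumset A C B"
  unfolding prodsumset_def by (rule Collect_cong) (metis add.commute)

lemma prodsumset_uminus: "prodsumset (uminus ` A) B C = uminus ` prodsumset A B C"
  unfolding prodsumset_def by (auto simp: image_iff) (metis, metis minus_mult_left)

lemma prodsumset_singletons: "prodsumset A {b} {c} = (\<lambda>a. a * (b + c)) ` A"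
  unfolding prodsumset_def by auto

lemma card_prodsumset_le_of_signed_subset:
  assumes "A' \<subseteq> A \<or> A' \<subseteq> uminus ` A" "finite A" "finite B" "finite C"
  shows "card (prodsumset A' B C) \<le> card (prodsumset A B C)"
  using assms(1)
proof
  assume "A' \<subseteq> A"
  then show ?thesis
    by (intro card_mono finite_prodsumset prodsumset_mono assms(2-4))
next
  assume "A' \<subseteq> uminus ` A"
  then have "card (prodsumset A' B C) \<le> card (prodsumset (uminus ` A) B C)"
    using assms(2-4) by (intro card_mono finite_prodsumset prodsumset_mono) auto
  also have "\<dots> = card (prodsumset A B C)"
    by (simp add: prodsumset_uminus card_image)
  finally show ?thesis .
qed

lemma large_positive_part:
  fixes A :: "real set"
  assumes fA: "finite A" and A0: "A \<noteq> {0}"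
  obtains A' where "A' \<subseteq> A \<or> A' \<subseteq> uminus ` A" "\<forall>a\<in>A'. 0 < a" "card A \<le> 4 * card A'"
proof -
  define P where "P = {a\<in>A. 0 < a}"
  define N where "N = {a\<in>A. a < 0}"
  have fP: "finite P" and fN: "finite N" using fA by (auto simp: P_def N_def)
  have "card (A - {0}) = card P + card N"
  proof -
    have "A - {0} = P \<union> N" "P \<inter> N = {}" by (auto simp: P_def N_def)
    then show ?thesis using fP fN by (simp add: card_Un_disjoint)
  qed
  moreover have "card A \<le> 2 * card (A - {0})"
  proof (cases "0 \<in> A")
    case True
    then obtain y where "y \<in> A" "y \<noteq> 0" using A0 by blast
    then have "card {0, y} \<le> card A" using True fA by (intro card_mono) auto
    with \<open>y \<noteq> 0\<close> True fA show ?thesis by simp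
  qed simp
  moreover have "card (uminus ` N) = card N" by (simp add: card_image)
  moreover have "uminus ` N \<subseteq> uminus ` A" "\<forall>a\<in>uminus ` N. 0 < a"
    by (auto simp: N_def)
  moreover have "P \<subseteq> A" "\<forall>a\<in>P. 0 < a" by (auto simp: P_def)
  ultimately show ?thesis
    using that[of P] that[of "uminus ` N"] by (cases "card N \<le> card P") auto
qed

definition gap :: "real set \<Rightarrow> real set \<Rightarrow> real set \<Rightarrow> real \<times> real \<times> real \<Rightarrow> nat" where
  "gap A B C = (\<lambda>(a, b, c).
     card {z \<in> prodsumset A B C. a * (b + c) \<le> z \<and> z < a * (b + next_in C c)})"

lemma sum_gap_le:
  assumes fA: "finite A" and fB: "finite B" and fC: "finite C" and pos: "\<forall>a\<in>A. 0 < a"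
  shows "(\<Sum>t\<in>A \<times> B \<times> (C - {Max C}). real (gap A B C t))
    \<le> real (card A) * real (card B) * real (card (prodsumset A B C))"
proof -
  have "(\<Sum>c\<in>C - {Max C}. gap A B C (a, b, c)) \<le> card (prodsumset A B C)" if "a \<in> A" for a b
  proof -
    have "mono_on C (\<lambda>c. a * (b + c))"
      using pos that by (intro mono_onI) simp
    then show ?thesis
      unfolding gap_def using sum_card_gaps_le finite_prodsumset[OF fA fB fC] fC by fastforce
  qed
  then have "(\<Sum>a\<in>A. \<Sum>b\<in>B. \<Sum>c\<in>C - {Max C}. real (gap A B C (a, b, c)))
      \<le> (\<Sum>a\<in>A. \<Sum>b\<in>B. real (card (prodsumset A B C)))"
    by (intro sum_mono) (simp flip: of_nat_sum)
  then show ?thesis by (simp add: sum.cartesian_product)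
qed

lemma card_small_gaps_le:
  fixes D :: real
  assumes fA: "finite A" and fB: "finite B" and fC: "finite C"
    and pos: "\<forall>a\<in>A. 0 < a" and D: "0 \<le> D"
  defines "X \<equiv> prodsumset A B C" and "C' \<equiv> C - {Max C}"
  shows "card {t \<in> A \<times> B \<times> C'. gap A B C t \<le> D} \<le> real (card C') * real (card X) * D"
proof -
  have fX: "finite X" unfolding X_def using fA fB fC by (rule finite_prodsumset)
  define T where "T = (SIGMA c:C'. SIGMA x:X. {y\<in>X. x < y \<and> card {z\<in>X. x \<le> z \<and> z < y} \<le> D})"
  define h where "h = (\<lambda>(a, b, c). (c, a * (b + c), a * (b + next_in C c)))"
  have "inj_on h (A \<times> B \<times> C')"
    \<comment> \<open>\<open>a\<close> is recovered as \<open>(y - x) / (next_in C c - c)\<close>, then \<open>b\<close> from \<open>x = a(b + c)\<close>\<close>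
  proof (rule inj_onI)
    fix t t' assume t: "t \<in> A \<times> B \<times> C'" and "h t = h t'"
    obtain a b c a' b' c' where [simp]: "t = (a, b, c)" "t' = (a', b', c')"
      using prod_cases3 by metis
    have c': "c' = c" and e: "a * (b + c) = a' * (b' + c)"
      "a * (b + next_in C c) = a' * (b' + next_in C c)"
      using \<open>h t = h t'\<close> by (auto simp: h_def)
    have "c < next_in C c" using t fC by (intro less_next_in) (auto simp: C'_def)
    moreover have "a * (next_in C c - c) = a' * (next_in C c - c)"
      using e by (simp add: algebra_simps)
    ultimately have a': "a' = a" by simp
    moreover have "a \<noteq> 0" using t pos by auto
    ultimately have "b' = b" using e by simp
    with a' c' show "t = t'" by simp
  qed
  define G where "G = {t \<in> A \<times> B \<times> C'. gap A B C t \<le> D}"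
  have "h ` G \<subseteq> T"
  proof (rule image_subsetI)
    fix t assume "t \<in> G"
    then obtain a b c where t: "t = (a, b, c)" and a: "a \<in> A" and b: "b \<in> B" and c: "c \<in> C'"
      and gap: "gap A B C (a, b, c) \<le> D"
      by (auto simp: G_def)
    have "next_in C c \<in> C" "c < next_in C c" using fC c unfolding C'_def
      by (auto intro: next_in_mem less_next_in)
    moreover have "c \<in> C" using c by (simp add: C'_def)
    ultimately have "a * (b + c) \<in> X" "a * (b + next_in C c) \<in> X"
      "a * (b + c) < a * (b + next_in C c)"
      using a b pos by (auto simp: X_def mem_prodsumset)
    with c gap show "h t \<in> T"
      by (simp add: t T_def h_def gap_def X_def)
  qed
  moreover have "finite T" using fX fC by (simp add: T_def C'_def)
  ultimately have "card (h ` G) \<le> card T" by (rule card_mono[rotated])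
  moreover have "inj_on h G"
    using \<open>inj_on h (A \<times> B \<times> C')\<close> by (rule inj_on_subset) (auto simp: G_def)
  then have "card (h ` G) = card G" by (rule card_image)
  ultimately have "real (card G) \<le> card T" by simp
  also have "\<dots> = (\<Sum>c\<in>C'. \<Sum>x\<in>X. real (card {y\<in>X. x < y \<and> card {z\<in>X. x \<le> z \<and> z < y} \<le> D}))"
    using fX fC by (simp add: T_def C'_def card_SigmaI)
  also have "\<dots> \<le> (\<Sum>c\<in>C'. \<Sum>x\<in>X. D)"
    by (intro sum_mono card_close_successors_le[OF fX _ D])
  also have "\<dots> = real (card C') * real (card X) * D" by simp
  finally show ?thesis unfolding G_def .
qed

lemma card_prodsumset_pos_lower:
  fixes A B C :: "real set"
  assumes fA: "finite A" and fB: "finite B" and fC: "finite C" and pos: "\<forall>a\<in>A. 0 < a"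
  shows "real (card A) * real (card B) * real (card (C - {Max C}))
    \<le> 4 * real (card (prodsumset A B C))^2"
proof -
  define X where "X = prodsumset A B C"
  define C' where "C' = C - {Max C}"
  define S where "S = A \<times> B \<times> C'"
  have cardS: "real (card S) = real (card A) * real (card B) * real (card C')"
    by (simp add: S_def card_cartesian_product)
  show ?thesis
  proof (cases "S = {}")
    case True
    then have "real (card A) * real (card B) * real (card C') = 0" using cardS by simp
    then show ?thesis
      unfolding C'_def using zero_le_power2[of "real (card (prodsumset A B C))"] by linarith
  next
    case False
    then obtain a b c where "a \<in> A" "b \<in> B" "c \<in> C'" by (auto simp: S_def)
    then have "a * (b + c) \<in> X" by (auto simp: X_def C'_def intro: mem_prodsumset)
    then have N: "real (card X) > 0"
      using finite_prodsumset[OF fA fB fC] by (auto simp: X_def card_gt_0_iff)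
    have m: "real (card C') > 0" using \<open>c \<in> C'\<close> fC by (auto simp: C'_def card_gt_0_iff)
    define D where "D = 2 * real (card X) / real (card C')"
    \<comment> \<open>balances the two terms of the bound below\<close>
    have D: "D > 0" using N m by (simp add: D_def)
    have "real (card S) \<le> (\<Sum>t\<in>S. real (gap A B C t)) / D + card {t\<in>S. gap A B C t \<le> D}"
      using fA fB fC D by (intro card_le_sum_div_plus_card_le) (auto simp: S_def C'_def)
    also have "\<dots> \<le> real (card A) * real (card B) * real (card X) / D + real (card C') * real (card X) * D"
      using sum_gap_le[OF fA fB fC pos] card_small_gaps_le[OF fA fB fC pos less_imp_le[OF D]] D
      by (intro add_mono divide_right_mono) (simp_all add: S_def C'_def X_def)
    also have "\<dots> = real (card A) * real (card B) * real (card C') / 2 + 2 * real (card X)^2"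
      using N m by (simp add: D_def field_simps power2_eq_square)
    finally show ?thesis using cardS by (simp add: X_def C'_def)
  qed
qed

lemma card_prodsumset_lower_of_two_le_card:
  fixes A B C :: "real set"
  assumes fA: "finite A" and A0: "A \<noteq> {0}" and fB: "finite B" and fC: "finite C"
    and C2: "2 \<le> card C"
  shows "real (card A) * real (card B) * real (card C) \<le> 32 * real (card (prodsumset A B C))^2"
proof -
  obtain A' where A': "A' \<subseteq> A \<or> A' \<subseteq> uminus ` A" and pos: "\<forall>a\<in>A'. 0 < a"
    and card_A': "card A \<le> 4 * card A'"
    using large_positive_part[OF fA A0] by blast
  have fA': "finite A'" using A' fA by (auto intro: finite_subset)
  have "C \<noteq> {}" using C2 by auto
  then have "card (C - {Max C}) = card C - 1" using fC by simp
  then have card_C: "real (card C) \<le> 2 * real (card (C - {Max C}))" using C2 by linarith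
  have "real (card (prodsumset A' B C)) \<le> real (card (prodsumset A B C))"
    using card_prodsumset_le_of_signed_subset[OF A' fA fB fC] by simp
  then have X: "real (card (prodsumset A' B C))^2 \<le> real (card (prodsumset A B C))^2"
    by (simp add: power_mono)
  have "real (card A) * real (card B) * real (card C)
      \<le> (4 * real (card A')) * real (card B) * (2 * real (card (C - {Max C})))"
    using card_A' card_C by (intro mult_mono) auto
  also have "\<dots> = 8 * (real (card A') * real (card B) * real (card (C - {Max C})))" by simp
  also have "\<dots> \<le> 32 * real (card (prodsumset A B C))^2"
    using card_prodsumset_pos_lower[OF fA' fB fC pos] X by linarith
  finally show ?thesis .
qed

lemma card_prodsumset_singletons:
  assumes "b + c \<noteq> 0"
  shows "card (prodsumset A {b} {c}) = card A"
  using assms by (simp add: prodsumset_singletons card_image inj_on_def)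

lemma card_prodsumset_lower:
  fixes A B C :: "real set"
  assumes fA: "finite A" and A0: "A \<noteq> {0}" and fB: "finite B" and fC: "finite C"
    and BC: "sumset B C \<noteq> {0}"
  shows "real (card A) * real (card B) * real (card C) \<le> 32 * real (card (prodsumset A B C))^2"
proof -
  consider "2 \<le> card C" | "2 \<le> card B" | "card B \<le> 1" "card C \<le> 1" by linarith
  then show ?thesis
  proof cases
    case 1
    then show ?thesis using card_prodsumset_lower_of_two_le_card[OF fA A0 fB fC] by blast
  next
    case 2
    then show ?thesis using card_prodsumset_lower_of_two_le_card[OF fA A0 fC fB]
      by (simp add: prodsumset_commute mult_ac)
  next
    case 3
    show ?thesis
    proof (cases "B = {} \<or> C = {}")
      case True
      then show ?thesis by auto
    next
      case False
      then have "card B = 1" "card C = 1" using 3 fB fC by (auto simp: le_Suc_eq)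
      then obtain b c where "B = {b}" "C = {c}" by (auto simp: card_1_singleton_iff)
      moreover have "b + c \<noteq> 0" using BC \<open>B = {b}\<close> \<open>C = {c}\<close> by (auto simp: sumset_def)
      ultimately have "card (prodsumset A B C) = card A"
        by (simp add: card_prodsumset_singletons)
      moreover have "real (card A) \<le> 32 * real (card A)^2"
        by (cases "card A") (auto simp: power2_eq_square)
      ultimately show ?thesis using \<open>B = {b}\<close> \<open>C = {c}\<close> by simp
    qed
  qed
qed

theorem lemma3p3:
  shows "\<exists>c::real > 0. \<forall>A B C :: real set.
           finite A \<longrightarrow> A \<noteq> {0} \<longrightarrow> finite B \<longrightarrow> finite C \<longrightarrow> sumset B C \<noteq> {0} \<longrightarrow>
           real (card (prodsumset A B C)) \<ge> c * sqrt (real (card A) * real (card B) * real (card C))"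
proof (intro exI[of _ "1/6"] conjI allI impI)
  fix A B C :: "real set"
  assume "finite A" "A \<noteq> {0}" "finite B" "finite C" "sumset B C \<noteq> {0}"
  then have "real (card A) * real (card B) * real (card C) \<le> 32 * real (card (prodsumset A B C))^2"
    by (rule card_prodsumset_lower)
  also have "\<dots> \<le> (6 * real (card (prodsumset A B C)))^2"
    by (simp add: power_mult_distrib)
  finally have "sqrt (real (card A) * real (card B) * real (card C)) \<le> 6 * real (card (prodsumset A B C))"
    by (intro real_le_lsqrt) auto
  then show "real (card (prodsumset A B C)) \<ge> 1/6 * sqrt (real (card A) * real (card B) * real (card C))"
    by simp
qed simp

end
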